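(* Let $\mathfrak R$ be an iterated graph system satisfying (GR1)–(GR3), with replacement graphs $G_k$. Let $\theta=[w^{(1)},\dots,w^{(l)}]$ be a path in $G_n$ and fix $v^{(1)}\in W_m$. Then there is at most one path $\hat\theta$ in $G_{n+m}$ of the form $\hat\theta=[w^{(1)}v^{(1)},\dots,w^{(l)}v^{(l)}]$ with $v^{(2)},\dots,v^{(l)}\in W_m$.
   Context: Graphs: $(V,E)$, $V$ finite non-empty, $E\subseteq V\times V$, $(x,y)\in E\Rightarrow(y,x)\notin E$; $\{x,y\}\in E$ means either orientation. A path is a sequence $[x_1,\dots,x_k]$ with $\{x_i,x_{i+1}\}\in E$. An iterated graph system consists of a connected graph $G_1=(S,E)$, a finite set $\mathcal T$ of types, a surjective typing $\mathfrak t:E\to\mathcal T$ and non-empty gluing rules $I_t\subseteq S\times S$. With $W_m=S^m$, $[w]_k=w_1\cdots w_k$ and $wv$ the concatenation of words, the replacement graphs $G_m=(W_m,E_m)$ are defined recursively: $(w,v)\in E_{m+1}$ iff either (1) $[w]_m=[v]_m$ and $(w_{m+1},v_{m+1})\in E$ (type $\mathfrak t(w_{m+1},v_{m+1})$), or (2) $([w]_m,[v]_m)\in E_m$ and $(w_{m+1},v_{m+1})\in I_{\mathfrak t([w]_m,[v]_m)}$ (type $\mathfrak t([w]_m,[v]_m)$). (GR1): for each $t$ and $w\in S$ there is at most one $v$ with $(w,v)\in I_t$ and at most one $v$ with $(v,w)\in I_t$. (GR2): for each $t$ and $w\in S$, $w$ cannot both have some $v$ with $(w,v)\in I_t$ and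 an outgoing edge of $G_1$ of type $t$, nor both have some $v$ with $(v,w)\in I_t$ and an incoming edge of $G_1$ of type $t$. (GR3): the sets of first and second coordinates of $I_t$ are disjoint for each $t$. *)

theory Defs
  imports Main
begin

definition is_graph :: "'a set \<Rightarrow> ('a \<times> 'a) set \<Rightarrow> bool" where
  "is_graph V E \<longleftrightarrow> finite V \<and> V \<noteq> {} \<and> E \<subseteq> V \<times> V \<and>
     (\<forall>x y. (x, y) \<in> E \<longrightarrow> (y, x) \<notin> E)"

definition is_path :: "'a set \<Rightarrow> ('a \<times> 'a) set \<Rightarrow> 'a list \<Rightarrow> bool" where
  "is_path V E xs \<longleftrightarrow> xs \<noteq> [] \<and> set xs \<subseteq> V \<and>
     (\<forall>i. Suc i < length xs \<longrightarrow> (xs ! i, xs ! Suc i) \<in> E \<or> (xs ! Suc i, xs ! i) \<in> E)"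

definition graph_connected :: "'a set \<Rightarrow> ('a \<times> 'a) set \<Rightarrow> bool" where
  "graph_connected V E \<longleftrightarrow> (\<forall>x\<in>V. \<forall>y\<in>V. \<exists>xs. is_path V E xs \<and> hd xs = x \<and> last xs = y)"

text \<open>Iterated graph system: G_1 = (S,E), types T, typing tf (surjective E -> T), gluing rules I.\<close>
definition IGS :: "'a set \<Rightarrow> ('a \<times> 'a) set \<Rightarrow> 't set \<Rightarrow> ('a \<times> 'a \<Rightarrow> 't) \<Rightarrow> ('t \<Rightarrow> ('a \<times> 'a) set) \<Rightarrow> bool" where
  "IGS S E T tf I \<longleftrightarrow> is_graph S E \<and> graph_connected S E \<and> finite T \<and> tf ` E = T \<and>
     (\<forall>t\<in>T. I t \<noteq> {} \<and> I t \<subseteq> S \<times> S)"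

definition GR1 :: "'a set \<Rightarrow> 't set \<Rightarrow> ('t \<Rightarrow> ('a \<times> 'a) set) \<Rightarrow> bool" where
  "GR1 S T I \<longleftrightarrow> (\<forall>t\<in>T. \<forall>w\<in>S.
     (\<forall>v v'. (w, v) \<in> I t \<longrightarrow> (w, v') \<in> I t \<longrightarrow> v = v') \<and>
     (\<forall>v v'. (v, w) \<in> I t \<longrightarrow> (v', w) \<in> I t \<longrightarrow> v = v'))"

definition GR2 :: "'a set \<Rightarrow> ('a \<times> 'a) set \<Rightarrow> 't set \<Rightarrow> ('a \<times> 'a \<Rightarrow> 't) \<Rightarrow> ('t \<Rightarrow> ('a \<times> 'a) set) \<Rightarrow> bool" where
  "GR2 S E T tf I \<longleftrightarrow> (\<forall>t\<in>T. \<forall>w\<in>S.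
     \<not> ((\<exists>v. (w, v) \<in> I t) \<and> (\<exists>u. (w, u) \<in> E \<and> tf (w, u) = t)) \<and>
     \<not> ((\<exists>v. (v, w) \<in> I t) \<and> (\<exists>u. (u, w) \<in> E \<and> tf (u, w) = t)))"

definition GR3 :: "'t set \<Rightarrow> ('t \<Rightarrow> ('a \<times> 'a) set) \<Rightarrow> bool" where
  "GR3 T I \<longleftrightarrow> (\<forall>t\<in>T. fst ` I t \<inter> snd ` I t = {})"

text \<open>Words of length m over S (W_m = S^m); words are lists, [w]_k = take k w, concatenation = @.\<close>
definition words :: "'a set \<Rightarrow> nat \<Rightarrow> 'a list set" where
  "words S m = {w. length w = m \<and> set w \<subseteq> S}"

text \<open>Type of an edge of G_m (meaningful on edges only). Letter w_{m+1} is w ! m.\<close>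
fun edge_type :: "('a \<times> 'a \<Rightarrow> 't) \<Rightarrow> nat \<Rightarrow> 'a list \<times> 'a list \<Rightarrow> 't" where
  "edge_type tf 0 p = undefined"
| "edge_type tf (Suc m) (w, v) =
     (if take m w = take m v then tf (w ! m, v ! m)
      else edge_type tf m (take m w, take m v))"

text \<open>Edge sets E_m of the replacement graphs; E_0 = {} (on W_0 = {[]}) so that E_1 = E.\<close>
fun rep_edges :: "'a set \<Rightarrow> ('a \<times> 'a) set \<Rightarrow> ('a \<times> 'a \<Rightarrow> 't) \<Rightarrow> ('t \<Rightarrow> ('a \<times> 'a) set) \<Rightarrow> nat
    \<Rightarrow> ('a list \<times> 'a list) set" where
  "rep_edges S E tf I 0 = {}"
| "rep_edges S E tf I (Suc m) =
     {(w, v). w \<in> words S (Suc m) \<and> v \<in> words S (Suc m) \<and>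
       ((take m w = take m v \<and> (w ! m, v ! m) \<in> E) \<or>
        ((take m w, take m v) \<in> rep_edges S E tf I m \<and>
         (w ! m, v ! m) \<in> I (edge_type tf m (take m w, take m v))))}"

end

theory Submission
  imports Defs
begin

text \<open>Above level \<open>n\<close>, an edge of \<open>G\<^sub>k\<close> between words with different \<open>n\<close>-prefixes is glued
  letter by letter along edges of the coarser graphs, and by (GR1) each gluing letter is
  determined by the letter it is glued to. Hence a vertex has at most one neighbour with a
  prescribed \<open>n\<close>-prefix different from its own, and a lift of a path of \<open>G\<^sub>n\<close> is determined,
  vertex by vertex, by its starting point.\<close>

lemma rep_edges_words:
  assumes "(w, v) \<in> rep_edges S E tf I k"
  shows "w \<in> words S k" "v \<in> words S k"
  using assms by (cases k; auto)+

lemma rep_edges_Suc_prefix_neq: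
  assumes "(w, v) \<in> rep_edges S E tf I (Suc k)" and "take k w \<noteq> take k v"
  shows "(take k w, take k v) \<in> rep_edges S E tf I k"
    and "(w ! k, v ! k) \<in> I (edge_type tf k (take k w, take k v))"
  using assms by auto

lemma rep_edges_asym:
  assumes "is_graph S E" and "(x, y) \<in> rep_edges S E tf I k"
  shows "(y, x) \<notin> rep_edges S E tf I k"
  using assms(2)
proof (induction k arbitrary: x y)
  case 0
  then show ?case by simp
next
  case (Suc k)
  have "(a, b) \<in> E \<Longrightarrow> (b, a) \<notin> E" for a b
    using assms(1) unfolding is_graph_def by blast
  with Suc show ?case
    by (cases "take k x = take k y") auto
qed

lemma rep_edges_irrefl:
  assumes "is_graph S E"
  shows "(x, x) \<notin> rep_edges S E tf I k"
  using rep_edges_asym[OF assms] by blast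

lemma edge_type_in_types:
  assumes "is_graph S E" and "tf ` E \<subseteq> T" and "(x, y) \<in> rep_edges S E tf I k"
  shows "edge_type tf k (x, y) \<in> T"
  using assms(3)
proof (induction k arbitrary: x y)
  case 0
  then show ?case by simp
next
  case (Suc k)
  show ?case
  proof (cases "take k x = take k y")
    case True
    then have "(x ! k, y ! k) \<in> E"
      using Suc.prems rep_edges_irrefl[OF assms(1), of "take k y" tf I k] by auto
    with True assms(2) show ?thesis by auto
  next
    case False
    with Suc show ?thesis by auto
  qed
qed

lemma rep_adjacent_Suc_prefix:
  assumes "(w, v) \<in> rep_edges S E tf I (Suc k) \<union> (rep_edges S E tf I (Suc k))\<inverse>"
    and "take k w \<noteq> take k v"
  shows "(take k w, take k v) \<in> rep_edges S E tf I k \<union> (rep_edges S E tf I k)\<inverse>"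
  using assms by auto

lemma rep_glued_letter_unique:
  assumes graph: "is_graph S E" and types: "tf ` E \<subseteq> T" and gr1: "GR1 S T I"
    and e1: "(u, u1) \<in> rep_edges S E tf I (Suc k) \<union> (rep_edges S E tf I (Suc k))\<inverse>"
    and e2: "(u, u2) \<in> rep_edges S E tf I (Suc k) \<union> (rep_edges S E tf I (Suc k))\<inverse>"
    and prefix_eq: "take k u1 = take k u2" and prefix_neq: "take k u1 \<noteq> take k u"
  shows "u1 ! k = u2 ! k"
proof -
  let ?R = "rep_edges S E tf I (Suc k)"
  have "u \<in> words S (Suc k)"
    using e1 by (blast dest: rep_edges_words)
  then have letter: "u ! k \<in> S"
    by (auto simp: words_def)
  have prefix_neq2: "take k u2 \<noteq> take k u"
    using prefix_eq prefix_neq by simp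
  consider (outgoing) "(u, u1) \<in> ?R" "(u, u2) \<in> ?R" | (incoming) "(u1, u) \<in> ?R" "(u2, u) \<in> ?R"
  proof -
    have "\<not> ((u, u1) \<in> ?R \<and> (u2, u) \<in> ?R)" "\<not> ((u1, u) \<in> ?R \<and> (u, u2) \<in> ?R)"
      using rep_edges_Suc_prefix_neq(1)[of _ _ S E tf I k] prefix_eq prefix_neq prefix_neq2
        rep_edges_asym[OF graph] by metis+
    with e1 e2 that show thesis by blast
  qed
  then show ?thesis
  proof cases
    case outgoing
    let ?t = "edge_type tf k (take k u, take k u1)"
    have "?t \<in> T"
      using outgoing prefix_neq rep_edges_Suc_prefix_neq(1) edge_type_in_types[OF graph types]
      by metis
    moreover have "(u ! k, u1 ! k) \<in> I ?t" "(u ! k, u2 ! k) \<in> I ?t"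
      using outgoing prefix_eq prefix_neq prefix_neq2 rep_edges_Suc_prefix_neq(2) by metis+
    ultimately show ?thesis
      using gr1 letter unfolding GR1_def by blast
  next
    case incoming
    let ?t = "edge_type tf k (take k u1, take k u)"
    have "?t \<in> T"
      using incoming prefix_neq rep_edges_Suc_prefix_neq(1) edge_type_in_types[OF graph types]
      by metis
    moreover have "(u1 ! k, u ! k) \<in> I ?t" "(u2 ! k, u ! k) \<in> I ?t"
      using incoming prefix_eq prefix_neq prefix_neq2 rep_edges_Suc_prefix_neq(2) by metis+
    ultimately show ?thesis
      using gr1 letter unfolding GR1_def by blast
  qed
qed

lemma rep_neighbour_determined_by_prefix:
  assumes graph: "is_graph S E" and types: "tf ` E \<subseteq> T" and gr1: "GR1 S T I"
    and "n \<le> k" and "take n u1 = take n u2" and "take n u1 \<noteq> take n u"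
    and "(u, u1) \<in> rep_edges S E tf I k \<union> (rep_edges S E tf I k)\<inverse>"
    and "(u, u2) \<in> rep_edges S E tf I k \<union> (rep_edges S E tf I k)\<inverse>"
  shows "u1 = u2"
  using assms(4-)
proof (induction k arbitrary: u u1 u2)
  case 0
  then show ?case by simp
next
  case (Suc k)
  have words: "u1 \<in> words S (Suc k)" "u2 \<in> words S (Suc k)"
    using Suc.prems(4,5) by (blast dest: rep_edges_words)+
  show ?case
  proof (cases "n = Suc k")
    case True
    with words Suc.prems(2) show ?thesis by (simp add: words_def)
  next
    case False
    with Suc.prems(1) have "n \<le> k" by simp
    then have min_nk: "min n k = n"
      by simp
    have prefix_neq: "take k u1 \<noteq> take k u" "take k u2 \<noteq> take k u"
      using Suc.prems(2,3) min_nk take_take by metis+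
    have "take k u1 = take k u2"
    proof (rule Suc.IH[OF \<open>n \<le> k\<close>])
      show "take n (take k u1) = take n (take k u2)" "take n (take k u1) \<noteq> take n (take k u)"
        using Suc.prems(2,3) by (simp_all add: min_nk)
      show "(take k u, take k u1) \<in> rep_edges S E tf I k \<union> (rep_edges S E tf I k)\<inverse>"
        "(take k u, take k u2) \<in> rep_edges S E tf I k \<union> (rep_edges S E tf I k)\<inverse>"
        using Suc.prems(4,5) prefix_neq rep_adjacent_Suc_prefix by metis+
    qed
    moreover have "u1 ! k = u2 ! k"
      using rep_glued_letter_unique[OF graph types gr1 Suc.prems(4,5)] calculation prefix_neq(1) .
    ultimately show ?thesis
      using words take_Suc_conv_app_nth[of k u1] take_Suc_conv_app_nth[of k u2]
      by (simp add: words_def)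
  qed
qed

lemma path_lift_unique:
  assumes graph: "is_graph S E" and types: "tf ` E \<subseteq> T" and gr1: "GR1 S T I"
    and "n \<le> k" and path: "is_path (words S n) (rep_edges S E tf I n) \<theta>"
    and lift1: "is_path (words S k) (rep_edges S E tf I k) \<theta>1" "length \<theta>1 = length \<theta>"
      "\<forall>i < length \<theta>. take n (\<theta>1 ! i) = \<theta> ! i"
    and lift2: "is_path (words S k) (rep_edges S E tf I k) \<theta>2" "length \<theta>2 = length \<theta>"
      "\<forall>i < length \<theta>. take n (\<theta>2 ! i) = \<theta> ! i"
    and "\<theta>1 ! 0 = \<theta>2 ! 0"
  shows "\<theta>1 = \<theta>2"
proof (rule nth_equalityI)
  show "length \<theta>1 = length \<theta>2"
    using lift1(2) lift2(2) by simp
  show "\<theta>1 ! i = \<theta>2 ! i" if "i < length \<theta>1" for i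
    using that
  proof (induction i)
    case 0
    from \<open>\<theta>1 ! 0 = \<theta>2 ! 0\<close> show ?case .
  next
    case (Suc i)
    have "(\<theta> ! i, \<theta> ! Suc i) \<in> rep_edges S E tf I n \<union> (rep_edges S E tf I n)\<inverse>"
      using path Suc.prems lift1(2) unfolding is_path_def by auto
    then have "\<theta> ! Suc i \<noteq> \<theta> ! i"
      using rep_edges_irrefl[OF graph] by (metis Un_iff converse_iff)
    moreover have "(\<theta>1 ! i, \<theta>1 ! Suc i) \<in> rep_edges S E tf I k \<union> (rep_edges S E tf I k)\<inverse>"
      using lift1(1) Suc.prems unfolding is_path_def by auto
    moreover have "(\<theta>2 ! i, \<theta>2 ! Suc i) \<in> rep_edges S E tf I k \<union> (rep_edges S E tf I k)\<inverse>"
      using lift2(1,2) lift1(2) Suc.prems unfolding is_path_def by auto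
    moreover have "take n (\<theta>1 ! j) = \<theta> ! j" "take n (\<theta>2 ! j) = \<theta> ! j"
      if "j \<le> Suc i" for j
      using that Suc.prems lift1(2,3) lift2(3) by simp_all
    ultimately show ?case
      using rep_neighbour_determined_by_prefix[OF graph types gr1 \<open>n \<le> k\<close>] Suc
      by (metis Suc_lessD le_refl le_SucI)
  qed
qed

theorem proposition5p4:
  fixes S :: "'a set" and E :: "('a \<times> 'a) set" and T :: "'t set"
    and tf :: "'a \<times> 'a \<Rightarrow> 't" and I :: "'t \<Rightarrow> ('a \<times> 'a) set"
    and n m :: nat and \<theta> \<theta>1 \<theta>2 :: "'a list list" and v1 :: "'a list"
  assumes "IGS S E T tf I" and "GR1 S T I" and "GR2 S E T tf I" and "GR3 T I"
    and "n \<ge> 1" and "m \<ge> 1"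
    and "is_path (words S n) (rep_edges S E tf I n) \<theta>"
    and "v1 \<in> words S m"
    and "is_path (words S (n + m)) (rep_edges S E tf I (n + m)) \<theta>1"
    and "length \<theta>1 = length \<theta>" and "\<forall>i < length \<theta>. take n (\<theta>1 ! i) = \<theta> ! i"
    and "drop n (\<theta>1 ! 0) = v1"
    and "is_path (words S (n + m)) (rep_edges S E tf I (n + m)) \<theta>2"
    and "length \<theta>2 = length \<theta>" and "\<forall>i < length \<theta>. take n (\<theta>2 ! i) = \<theta> ! i"
    and "drop n (\<theta>2 ! 0) = v1"
  shows "\<theta>1 = \<theta>2"
proof -
  have graph: "is_graph S E" and types: "tf ` E \<subseteq> T"
    using assms(1) unfolding IGS_def by auto
  have "\<theta> \<noteq> []"
    using assms(7) unfolding is_path_def by simp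
  then have "\<theta>1 ! 0 = \<theta>2 ! 0"
    using assms(11,12,15,16) by (metis append_take_drop_id length_greater_0_conv)
  with path_lift_unique[OF graph types assms(2) le_add1 assms(7,9-11,13-15)] show ?thesis .
qed

end
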